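(* Let $G$ and $H$ be abelian groups with tiles $T \subset G$ and $A \subset B \subset H$, and let $k,\ell,d,u,v \ge 0$ be integers. Suppose that $G^k\times H^\ell\times B^d$ is $(T^{\times k}, A^{\times(\ell+d)})$-tilable and that $G^u\times H^v$ is $(T^{\times u}, B^{\times v})$-tilable. Then $G^{du+k}\times H^{dv+\ell}$ is $(T^{\times(du+k)}, A^{\times(dv+\ell)})$-tilable.
   Context: A tile in an abelian group is a non-empty subset. Given abelian groups $K_1,\dots,K_r$ and tiles $V_j\subset K_j$, let $\mathsf{V}_j \subset K_1\times\dots\times K_r$ be the set of points whose $j$-th coordinate lies in $V_j$ and whose other coordinates are $0$. A copy of $V_j$ is a translate $\mathsf{V}_j + x$ with $x \in K_1\times\dots\times K_r$. A subset of $K_1\times\dots\times K_r$ is $(V_1,\dots,V_r)$-tilable if it is a disjoint union of copies of $V_1,\dots,V_r$. The notation $V^{\times e}$ in such a list stands for $e$ consecutive entries $V,\dots,V$; e.g. $(T^{\times k},A^{\times(\ell+d)})$-tilable for a subset of $G^k\times H^\ell\times B^d\subset G^k\times H^{\ell+d}$ means the first $k$ factors carry the tile $T$ and the remaining $\ell+d$ factors carry the tile $A$. *)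

theory Defs
  imports Main
begin

text \<open>Points of G^m x H^n are pairs (x, y) of functions x :: nat => 'g, y :: nat => 'h,
  where coordinates i < m of x are the G-factors, coordinates j < n of y are the H-factors,
  and all other coordinates are 0.\<close>

definition space :: "nat \<Rightarrow> nat \<Rightarrow> ((nat \<Rightarrow> 'g::zero) \<times> (nat \<Rightarrow> 'h::zero)) set" where
  "space m n = {(x, y). (\<forall>i\<ge>m. x i = 0) \<and> (\<forall>j\<ge>n. y j = 0)}"

definition tileG :: "nat \<Rightarrow> 'g::zero set \<Rightarrow> ((nat \<Rightarrow> 'g) \<times> (nat \<Rightarrow> 'h::zero)) set" where
  "tileG i V = {(x, y). x i \<in> V \<and> (\<forall>i'. i' \<noteq> i \<longrightarrow> x i' = 0) \<and> (\<forall>j. y j = 0)}"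

definition tileH :: "nat \<Rightarrow> 'h::zero set \<Rightarrow> ((nat \<Rightarrow> 'g::zero) \<times> (nat \<Rightarrow> 'h)) set" where
  "tileH j V = {(x, y). y j \<in> V \<and> (\<forall>i. x i = 0) \<and> (\<forall>j'. j' \<noteq> j \<longrightarrow> y j' = 0)}"

definition translate ::
  "((nat \<Rightarrow> 'g::plus) \<times> (nat \<Rightarrow> 'h::plus)) \<Rightarrow> ((nat \<Rightarrow> 'g) \<times> (nat \<Rightarrow> 'h)) set
     \<Rightarrow> ((nat \<Rightarrow> 'g) \<times> (nat \<Rightarrow> 'h)) set" where
  "translate t S = (\<lambda>(x, y). (\<lambda>i. x i + fst t i, \<lambda>j. y j + snd t j)) ` S"

definition copies :: "nat \<Rightarrow> nat \<Rightarrow> 'g::ab_group_add set \<Rightarrow> 'h::ab_group_add set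
     \<Rightarrow> ((nat \<Rightarrow> 'g) \<times> (nat \<Rightarrow> 'h)) set set" where
  "copies m n T A =
     {translate t (tileG i T) | i t. i < m \<and> t \<in> space m n} \<union>
     {translate t (tileH j A) | j t. j < n \<and> t \<in> space m n}"

definition tilable :: "nat \<Rightarrow> nat \<Rightarrow> 'g::ab_group_add set \<Rightarrow> 'h::ab_group_add set
     \<Rightarrow> ((nat \<Rightarrow> 'g) \<times> (nat \<Rightarrow> 'h)) set \<Rightarrow> bool" where
  "tilable m n T A S \<longleftrightarrow>
     (\<exists>C. C \<subseteq> copies m n T A \<and> pairwise disjnt C \<and> \<Union>C = S)"

end

(*
  Split the coordinates of G^(du+k) x H^(dv+l) into the first k G- and l H-coordinates and d
  blocks, each a copy of G^u x H^v. Tiling every block with the given tiling of G^u x H^v cuts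
  the space into cells, one for each choice of a tile per block. If some block carries a copy
  of T, the cell is a disjoint union of parallel translates of that copy. Otherwise block i
  carries a copy of B on a single H-coordinate b_i, and the cell is the image of
  G^k x H^l x B^d under an injective affine map which sends the (l+i)-th H-coordinate to b_i;
  this map sends copies of T and A to copies of T and A, so it transports the given tiling of
  G^k x H^l x B^d onto the cell.
*)

theory Submission
  imports Defs "HOL-Library.Function_Algebras" "HOL-Library.Product_Plus"
begin

type_synonym ('g, 'h) point = "(nat \<Rightarrow> 'g) \<times> (nat \<Rightarrow> 'h)"

lemma translate_eq_image: "translate t S = (\<lambda>p. p + t) ` S"
proof -
  have "(\<lambda>(x, y). (\<lambda>i. x i + fst t i, \<lambda>j. y j + snd t j)) = (\<lambda>p. p + t)"
    by (auto simp: plus_fun_def prod_eq_iff)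
  then show ?thesis unfolding translate_def by simp
qed

lemma mem_translate:
  fixes t :: "('g::ab_group_add, 'h::ab_group_add) point"
  shows "q \<in> translate t S \<longleftrightarrow> q - t \<in> S"
  unfolding translate_eq_image by (auto simp: image_iff intro: bexI[of _ "q - t"])

lemma mem_space: "p \<in> space m n \<longleftrightarrow> (\<forall>i\<ge>m. fst p i = 0) \<and> (\<forall>j\<ge>n. snd p j = 0)"
  by (cases p) (simp add: space_def)

lemma space_add:
  fixes p q :: "('g::ab_group_add, 'h::ab_group_add) point"
  shows "p \<in> space m n \<Longrightarrow> q \<in> space m n \<Longrightarrow> p + q \<in> space m n"
  by (simp add: mem_space)

lemma mem_translate_tileG:
  fixes t :: "('g::ab_group_add, 'h::ab_group_add) point"
  shows "q \<in> translate t (tileG c V) \<longleftrightarrow>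
    fst q c - fst t c \<in> V \<and> (\<forall>i. i \<noteq> c \<longrightarrow> fst q i = fst t i) \<and> snd q = snd t"
  by (cases q, cases t) (auto simp: mem_translate tileG_def fun_eq_iff)

lemma mem_translate_tileH:
  fixes t :: "('g::ab_group_add, 'h::ab_group_add) point"
  shows "q \<in> translate t (tileH c V) \<longleftrightarrow>
    snd q c - snd t c \<in> V \<and> fst q = fst t \<and> (\<forall>j. j \<noteq> c \<longrightarrow> snd q j = snd t j)"
  by (cases q, cases t) (auto simp: mem_translate tileH_def fun_eq_iff)

lemma mem_tileH: "q \<in> tileH c V \<longleftrightarrow> snd q c \<in> V \<and> (\<forall>i. fst q i = 0) \<and> (\<forall>j. j \<noteq> c \<longrightarrow> snd q j = 0)"
  by (cases q) (simp add: tileH_def)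

lemma copies_subset_space: "Q \<in> copies m n T A \<Longrightarrow> Q \<subseteq> space m n"
  unfolding copies_def by (auto simp: mem_translate_tileG mem_translate_tileH mem_space)

lemma translate_tileG_in_copies:
  "i < m \<Longrightarrow> t \<in> space m n \<Longrightarrow> translate t (tileG i T) \<in> copies m n T A"
  unfolding copies_def by blast

lemma translate_tileH_in_copies:
  "j < n \<Longrightarrow> t \<in> space m n \<Longrightarrow> translate t (tileH j A) \<in> copies m n T A"
  unfolding copies_def by blast

lemma copies_cases:
  assumes "Q \<in> copies m n T A"
  obtains i t where "i < m" "t \<in> space m n" "Q = translate t (tileG i T)"
    | j t where "j < n" "t \<in> space m n" "Q = translate t (tileH j A)"
  using assms unfolding copies_def by blast

lemma tilable_copy: "Q \<in> copies m n T A \<Longrightarrow> tilable m n T A Q"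
  unfolding tilable_def by (intro exI[of _ "{Q}"]) simp

section \<open>Partitions, lines and images of tilable sets\<close>

lemma tilable_Union:
  assumes "pairwise disjnt \<P>" and "\<And>Q. Q \<in> \<P> \<Longrightarrow> tilable m n T A Q"
  shows "tilable m n T A (\<Union>\<P>)"
proof -
  obtain C where C: "\<And>Q. Q \<in> \<P> \<Longrightarrow> C Q \<subseteq> copies m n T A \<and> pairwise disjnt (C Q) \<and> \<Union>(C Q) = Q"
    using assms(2) unfolding tilable_def by metis
  have "\<Union>(\<Union>Q\<in>\<P>. C Q) = (\<Union>Q\<in>\<P>. \<Union>(C Q))" by blast
  also have "\<dots> = \<Union>\<P>" using C by simp
  finally have cover: "\<Union>(\<Union>Q\<in>\<P>. C Q) = \<Union>\<P>" .
  have "pairwise disjnt (\<Union>Q\<in>\<P>. C Q)"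
  proof (rule pairwiseI)
    fix R R' assume "R \<in> (\<Union>Q\<in>\<P>. C Q)" "R' \<in> (\<Union>Q\<in>\<P>. C Q)" "R \<noteq> R'"
    then obtain Q Q' where "Q \<in> \<P>" "Q' \<in> \<P>" "R \<in> C Q" "R' \<in> C Q'" by blast
    show "disjnt R R'"
    proof (cases "Q = Q'")
      case True
      then show ?thesis using C \<open>Q \<in> \<P>\<close> \<open>R \<in> C Q\<close> \<open>R' \<in> C Q'\<close> \<open>R \<noteq> R'\<close>
        by (auto simp: pairwise_def)
    next
      case False
      then have "disjnt Q Q'" using assms(1) \<open>Q \<in> \<P>\<close> \<open>Q' \<in> \<P>\<close> by (simp add: pairwise_def)
      moreover have "R \<subseteq> Q" "R' \<subseteq> Q'" using C \<open>Q \<in> \<P>\<close> \<open>Q' \<in> \<P>\<close> \<open>R \<in> C Q\<close> \<open>R' \<in> C Q'\<close> by blast+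
      ultimately show ?thesis by (meson disjnt_subset1 disjnt_subset2)
    qed
  qed
  then show ?thesis unfolding tilable_def using C cover by (intro exI[of _ "\<Union>Q\<in>\<P>. C Q"]) blast
qed

lemma tilable_fibres:
  assumes "\<And>z. z \<in> S \<Longrightarrow> tilable m n T A {w \<in> S. f w = f z}"
  shows "tilable m n T A S"
proof -
  have "S = \<Union>((\<lambda>z. {w \<in> S. f w = f z}) ` S)" by blast
  moreover have "pairwise disjnt ((\<lambda>z. {w \<in> S. f w = f z}) ` S)"
    by (auto simp: pairwise_def disjnt_def)
  ultimately show ?thesis using tilable_Union assms by (metis (no_types, lifting) imageE)
qed

lemma tilable_lineG:
  fixes X :: "('g::ab_group_add, 'h::ab_group_add) point set"
  assumes "c < m" "X \<subseteq> space m n"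
    and line: "\<And>w w'. w \<in> X \<Longrightarrow> (\<forall>i. i \<noteq> c \<longrightarrow> fst w' i = fst w i) \<Longrightarrow> snd w' = snd w \<Longrightarrow>
      w' \<in> X \<longleftrightarrow> fst w' c - g \<in> T"
  shows "tilable m n T A X"
proof (rule tilable_fibres[where f = "\<lambda>w. ((fst w)(c := g), snd w)"])
  fix z assume "z \<in> X"
  let ?t = "((fst z)(c := g), snd z)"
  have same_line: "((fst w)(c := g), snd w) = ?t \<longleftrightarrow>
      (\<forall>i. i \<noteq> c \<longrightarrow> fst w i = fst z i) \<and> snd w = snd z" for w :: "('g, 'h) point"
    by (auto simp: fun_eq_iff)
  have "{w \<in> X. ((fst w)(c := g), snd w) = ?t} = translate ?t (tileG c T)"
    using line[OF \<open>z \<in> X\<close>] unfolding same_line by (auto simp: mem_translate_tileG)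
  moreover have "?t \<in> space m n"
    using \<open>z \<in> X\<close> assms(1,2) by (auto simp: mem_space)
  ultimately show "tilable m n T A {w \<in> X. ((fst w)(c := g), snd w) = ?t}"
    using \<open>c < m\<close> by (simp add: tilable_copy translate_tileG_in_copies)
qed

lemma tilable_image:
  assumes "tilable m n T A Y" "inj_on \<phi> Y"
    and "\<And>Q. Q \<in> copies m n T A \<Longrightarrow> Q \<subseteq> Y \<Longrightarrow> \<phi> ` Q \<in> copies m' n' T' A'"
  shows "tilable m' n' T' A' (\<phi> ` Y)"
proof -
  obtain C where C: "C \<subseteq> copies m n T A" "pairwise disjnt C" "\<Union>C = Y"
    using assms(1) unfolding tilable_def by blast
  have "pairwise disjnt ((`) \<phi> ` C)"
  proof (rule pairwiseI)
    fix R R' assume "R \<in> (`) \<phi> ` C" "R' \<in> (`) \<phi> ` C" "R \<noteq> R'"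
    then obtain P P' where P: "P \<in> C" "P' \<in> C" "R = \<phi> ` P" "R' = \<phi> ` P'" "P \<noteq> P'" by blast
    then have "\<phi> ` P \<inter> \<phi> ` P' = \<phi> ` (P \<inter> P')"
      using C(3) by (intro inj_on_image_Int[OF assms(2), symmetric]) auto
    then show "disjnt R R'" using P C(2) by (auto simp: pairwise_def disjnt_def)
  qed
  moreover have "(`) \<phi> ` C \<subseteq> copies m' n' T' A'" using C assms(3) by blast
  moreover have "\<Union>((`) \<phi> ` C) = \<phi> ` Y" using C by blast
  ultimately show ?thesis unfolding tilable_def by blast
qed

definition reindexH :: "(nat \<Rightarrow> nat) \<Rightarrow> nat \<Rightarrow> ('g, 'h::zero) point \<Rightarrow> ('g, 'h) point" where
  "reindexH \<sigma> n p = (fst p, \<lambda>c. if c \<in> \<sigma> ` {..<n} then snd p (the_inv_into {..<n} \<sigma> c) else 0)"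

lemma fst_reindexH [simp]: "fst (reindexH \<sigma> n p) = fst p"
  by (simp add: reindexH_def)

lemma snd_reindexH_image:
  "inj_on \<sigma> {..<n} \<Longrightarrow> j < n \<Longrightarrow> snd (reindexH \<sigma> n p) (\<sigma> j) = snd p j"
  by (simp add: reindexH_def the_inv_into_f_f)

lemma snd_reindexH_outside: "c \<notin> \<sigma> ` {..<n} \<Longrightarrow> snd (reindexH \<sigma> n p) c = 0"
  by (simp add: reindexH_def)

lemma reindexH_add:
  fixes p q :: "('g::plus, 'h::monoid_add) point"
  shows "reindexH \<sigma> n (p + q) = reindexH \<sigma> n p + reindexH \<sigma> n q"
  by (simp add: reindexH_def prod_eq_iff fun_eq_iff)

lemma reindexH_tileG: "reindexH \<sigma> n ` tileG a V = (tileG a V :: ('g::zero, 'h::zero) point set)"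
proof -
  have "reindexH \<sigma> n ` tileG a V = id ` (tileG a V :: ('g, 'h) point set)"
    by (rule image_cong) (auto simp: reindexH_def tileG_def)
  then show ?thesis by simp
qed

lemma reindexH_tileH:
  fixes V :: "'h::zero set"
  assumes \<sigma>: "inj_on \<sigma> {..<n}" and "j < n"
  shows "reindexH \<sigma> n ` tileH j V = (tileH (\<sigma> j) V :: ('g::zero, 'h) point set)"
proof (intro equalityI subsetI)
  fix q' :: "('g, 'h) point" assume "q' \<in> reindexH \<sigma> n ` tileH j V"
  then obtain q where q: "q \<in> tileH j V" "q' = reindexH \<sigma> n q" by blast
  have "snd q' c = 0" if "c \<noteq> \<sigma> j" for c
  proof (cases "c \<in> \<sigma> ` {..<n}")
    case True
    then obtain j' where j': "j' < n" "c = \<sigma> j'" by blast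
    with that have "j' \<noteq> j" by blast
    then have "snd q j' = 0" using q(1) by (cases q) (simp add: tileH_def)
    then show ?thesis using q(2) j' snd_reindexH_image[OF \<sigma> j'(1), of q] by simp
  qed (simp add: q snd_reindexH_outside)
  moreover have "snd q' (\<sigma> j) = snd q j" using q(2) snd_reindexH_image[OF assms] by simp
  ultimately show "q' \<in> tileH (\<sigma> j) V" using q by (simp add: mem_tileH)
next
  fix q' :: "('g, 'h) point" assume q': "q' \<in> tileH (\<sigma> j) V"
  let ?q = "(0, (\<lambda>_. 0)(j := snd q' (\<sigma> j))) :: ('g, 'h) point"
  have "reindexH \<sigma> n ?q = q'"
  proof -
    have "snd (reindexH \<sigma> n ?q) c = snd q' c" for c
    proof (cases "c \<in> \<sigma> ` {..<n}")
      case True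
      then obtain j' where "j' < n" "c = \<sigma> j'" by blast
      then show ?thesis using q' inj_onD[OF \<sigma>] \<open>j < n\<close>
        by (cases "j' = j") (auto simp: mem_tileH snd_reindexH_image[OF \<sigma>])
    next
      case False
      then show ?thesis using q' \<open>j < n\<close> by (auto simp: tileH_def snd_reindexH_outside)
    qed
    moreover have "fst (reindexH \<sigma> n ?q) = fst q'" using q' by (auto simp: reindexH_def tileH_def)
    ultimately show ?thesis by (simp add: prod_eq_iff fun_eq_iff)
  qed
  moreover have "?q \<in> tileH j V" using q' by (auto simp: tileH_def)
  ultimately show "q' \<in> reindexH \<sigma> n ` tileH j V" by (metis image_eqI)
qed

lemma reindexH_in_space:
  assumes "p \<in> space m n" "\<sigma> ` {..<n} \<subseteq> {..<n'}" "m \<le> m'"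
  shows "reindexH \<sigma> n p \<in> space m' n'"
  using assms unfolding mem_space reindexH_def by auto

lemma inj_on_reindexH:
  assumes "inj_on \<sigma> {..<n}"
  shows "inj_on (reindexH \<sigma> n) (space m n :: ('g::zero, 'h::zero) point set)"
proof (rule inj_onI)
  fix p q :: "('g, 'h) point"
  assume "p \<in> space m n" "q \<in> space m n" and eq: "reindexH \<sigma> n p = reindexH \<sigma> n q"
  have "snd p j = snd q j" for j
  proof (cases "j < n")
    case True
    then show ?thesis using arg_cong[OF eq, of "\<lambda>p. snd p (\<sigma> j)"]
        snd_reindexH_image[OF assms True, of p] snd_reindexH_image[OF assms True, of q] by simp
  next
    case False
    then show ?thesis using \<open>p \<in> space m n\<close> \<open>q \<in> space m n\<close> by (simp add: mem_space)
  qed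
  moreover have "fst p = fst q" using arg_cong[OF eq, of fst] by (simp add: reindexH_def)
  ultimately show "p = q" by (simp add: prod_eq_iff fun_eq_iff)
qed

lemma tilable_reindexH:
  fixes t :: "('g::ab_group_add, 'h::ab_group_add) point"
  assumes "tilable m n T A Y" "inj_on \<sigma> {..<n}" "\<sigma> ` {..<n} \<subseteq> {..<n'}" "m \<le> m'"
    and "t \<in> space m' n'"
  shows "tilable m' n' T A ((\<lambda>p. reindexH \<sigma> n p + t) ` Y)"
proof (rule tilable_image[OF assms(1)])
  have "Y \<subseteq> space m n"
    using assms(1) copies_subset_space unfolding tilable_def by blast
  then show "inj_on (\<lambda>p. reindexH \<sigma> n p + t) Y"
    using inj_on_reindexH[OF assms(2)] by (auto simp: inj_on_def)
next
  fix Q assume "Q \<in> copies m n T A"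
  let ?\<phi> = "\<lambda>p. reindexH \<sigma> n p + t"
  have image_translate: "?\<phi> ` translate s V = translate (?\<phi> s) (reindexH \<sigma> n ` V)" for s V
    unfolding translate_eq_image image_image reindexH_add by (simp add: ac_simps)
  have shift_space: "?\<phi> s \<in> space m' n'" if "s \<in> space m n" for s
    using reindexH_in_space[OF that assms(3,4)] assms(5) by (rule space_add)
  from \<open>Q \<in> copies m n T A\<close> show "?\<phi> ` Q \<in> copies m' n' T A"
  proof (cases rule: copies_cases)
    case (1 i s)
    then show ?thesis using assms(4) shift_space
      by (simp add: image_translate reindexH_tileG translate_tileG_in_copies)
  next
    case (2 j s)
    then have "\<sigma> j < n'" using assms(3) by blast
    with 2 show ?thesis using shift_space
      by (simp add: image_translate reindexH_tileH[OF assms(2)] translate_tileH_in_copies)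
  qed
qed

lemma tileH_eq: "q \<in> tileH c V \<Longrightarrow> q = (0, (\<lambda>_. 0)(c := snd q c))"
  by (auto simp: mem_tileH prod_eq_iff fun_eq_iff)

definition tile_of :: "'a set set \<Rightarrow> 'a \<Rightarrow> 'a set" where
  "tile_of C p = (THE Q. Q \<in> C \<and> p \<in> Q)"

lemma tile_of_eq: "pairwise disjnt C \<Longrightarrow> Q \<in> C \<Longrightarrow> p \<in> Q \<Longrightarrow> tile_of C p = Q"
  unfolding tile_of_def by (rule the_equality) (auto simp: pairwise_def disjnt_def)

lemma tile_of_mem: "pairwise disjnt C \<Longrightarrow> p \<in> \<Union>C \<Longrightarrow> tile_of C p \<in> C \<and> p \<in> tile_of C p"
  using tile_of_eq by fastforce

lemma tile_of_eq_iff: "pairwise disjnt C \<Longrightarrow> p \<in> \<Union>C \<Longrightarrow> Q \<in> C \<Longrightarrow> tile_of C p = Q \<longleftrightarrow> p \<in> Q"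
  using tile_of_eq tile_of_mem by metis

definition space_B :: "nat \<Rightarrow> nat \<Rightarrow> nat \<Rightarrow> 'h set \<Rightarrow> ('g::zero, 'h::zero) point set" where
  "space_B m n e B = {(x, y) \<in> space m (n + e). \<forall>j. n \<le> j \<and> j < n + e \<longrightarrow> y j \<in> B}"

lemma mem_space_B:
  "p \<in> space_B m n e B \<longleftrightarrow> p \<in> space m (n + e) \<and> (\<forall>j. n \<le> j \<and> j < n + e \<longrightarrow> snd p j \<in> B)"
  by (cases p) (simp add: space_B_def)

section \<open>Block decomposition\<close>

lemma mult_add_less_inj:
  fixes a a' u :: nat
  assumes "a < u" "a' < u" "i * u + a = j * u + a'"
  shows "i = j \<and> a = a'"
proof -
  have "(i * u + a) div u = i" "(i * u + a) mod u = a"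
    "(j * u + a') div u = j" "(j * u + a') mod u = a'" using assms(1,2) by simp_all
  then show ?thesis using assms(3) by metis
qed

lemma decompose_mult_add:
  fixes c k d u :: nat
  assumes "k \<le> c" "c < k + d * u"
  obtains i a where "i < d" "a < u" "c = k + i * u + a"
proof
  have "u > 0" using assms by (cases u) auto
  show "(c - k) div u < d" using assms by (simp add: less_mult_imp_div_less)
  show "(c - k) mod u < u" using \<open>u > 0\<close> by simp
  show "c = k + (c - k) div u * u + (c - k) mod u" using assms(1) by simp
qed

lemma mult_add_less:
  fixes i d a u :: nat
  assumes "i < d" "a < u"
  shows "i * u + a < d * u"
proof -
  have "i * u + a < Suc i * u" using assms(2) by simp
  also have "\<dots> \<le> d * u" using assms(1) by (intro mult_le_mono1) simp
  finally show ?thesis .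
qed

locale blocks =
  fixes k l d u v :: nat
begin

definition block :: "nat \<Rightarrow> ('g::zero, 'h::zero) point \<Rightarrow> ('g, 'h) point" where
  "block i z = (\<lambda>a. if a < u then fst z (k + i * u + a) else 0,
                \<lambda>b. if b < v then snd z (l + i * v + b) else 0)"

definition glue :: "(nat \<Rightarrow> ('g::zero, 'h::zero) point) \<Rightarrow> ('g, 'h) point" where
  "glue s = (\<lambda>c. if k \<le> c \<and> c < k + d * u then fst (s ((c - k) div u)) ((c - k) mod u) else 0,
             \<lambda>c. if l \<le> c \<and> c < l + d * v then snd (s ((c - l) div v)) ((c - l) mod v) else 0)"

definition cell :: "(nat \<Rightarrow> ('g::zero, 'h::zero) point set) \<Rightarrow> ('g, 'h) point set" where
  "cell P = {z \<in> space (d * u + k) (d * v + l). \<forall>i<d. block i z \<in> P i}"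

lemma block_in_space: "block i z \<in> space u v"
  by (simp add: block_def mem_space)

lemma block_add:
  fixes p q :: "('g::monoid_add, 'h::monoid_add) point"
  shows "block i (p + q) = block i p + block i q"
  by (simp add: block_def prod_eq_iff fun_eq_iff)

lemma glue_in_space: "glue s \<in> space (d * u + k) (d * v + l)"
  by (simp add: glue_def mem_space)

lemma block_glue:
  assumes "i < d" "s i \<in> space u v"
  shows "block i (glue s) = s i"
  using assms mult_add_less[OF assms(1)]
  by (auto simp: block_def glue_def mem_space prod_eq_iff fun_eq_iff)

lemma block_eqI:
  assumes "w \<in> space (d * u + k) (d * v + l)" "w' \<in> space (d * u + k) (d * v + l)"
    and "\<And>c. c < k \<Longrightarrow> fst w c = fst w' c" "\<And>c. c < l \<Longrightarrow> snd w c = snd w' c"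
    and "\<And>i. i < d \<Longrightarrow> block i w = block i w'"
  shows "w = w'"
proof -
  have "fst w c = fst w' c" for c
  proof -
    consider "c < k" | "k \<le> c" "c < k + d * u" | "d * u + k \<le> c" by linarith
    then show ?thesis
    proof cases
      case 2
      then obtain i a where "i < d" "a < u" "c = k + i * u + a" by (rule decompose_mult_add)
      then show ?thesis
        using fun_cong[OF arg_cong[OF assms(5), of i fst], of a] by (simp add: block_def)
    qed (use assms in \<open>auto simp: mem_space\<close>)
  qed
  moreover have "snd w c = snd w' c" for c
  proof -
    consider "c < l" | "l \<le> c" "c < l + d * v" | "d * v + l \<le> c" by linarith
    then show ?thesis
    proof cases
      case 2
      then obtain i b where "i < d" "b < v" "c = l + i * v + b" by (rule decompose_mult_add)
      then show ?thesis
        using fun_cong[OF arg_cong[OF assms(5), of i snd], of b] by (simp add: block_def)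
    qed (use assms in \<open>auto simp: mem_space\<close>)
  qed
  ultimately show ?thesis by (simp add: prod_eq_iff fun_eq_iff)
qed

lemma tilable_cell_lineG:
  fixes P :: "nat \<Rightarrow> ('g::ab_group_add, 'h::ab_group_add) point set"
  assumes "i < d" "a < u" and Pi: "P i = translate s (tileG a T)"
  shows "tilable (d * u + k) (d * v + l) T A (cell P)"
proof (rule tilable_lineG[where c = "k + i * u + a" and g = "fst s a"])
  show "k + i * u + a < d * u + k" using mult_add_less[OF assms(1,2)] by simp
  show "cell P \<subseteq> space (d * u + k) (d * v + l)" by (auto simp: cell_def)
  fix w w' :: "('g, 'h) point"
  assume w: "w \<in> cell P"
    and off_line: "\<forall>c. c \<noteq> k + i * u + a \<longrightarrow> fst w' c = fst w c" and snd_eq: "snd w' = snd w"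
  have w'_space: "w' \<in> space (d * u + k) (d * v + l)"
  proof -
    have "w \<in> space (d * u + k) (d * v + l)" using w by (simp add: cell_def)
    moreover have "fst w' c = fst w c" if "d * u + k \<le> c" for c
      using off_line that mult_add_less[OF assms(1,2)] by simp
    ultimately show ?thesis using snd_eq by (simp add: mem_space)
  qed
  have other_blocks: "block j w' = block j w" if "j \<noteq> i" for j
  proof -
    have "k + j * u + x \<noteq> k + i * u + a" if "x < u" for x
      using mult_add_less_inj[OF that assms(2)] \<open>j \<noteq> i\<close> by auto
    then show ?thesis using off_line snd_eq by (auto simp: block_def prod_eq_iff fun_eq_iff)
  qed
  have this_block: "block i w' \<in> P i \<longleftrightarrow> fst w' (k + i * u + a) - fst s a \<in> T"
  proof -
    have "block i w \<in> translate s (tileG a T)" using w assms(1) by (simp add: cell_def flip: Pi)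
    moreover have "fst (block i w') a' = fst (block i w) a'" if "a' \<noteq> a" for a'
      using off_line that mult_add_less_inj[of a u a' i i] by (auto simp: block_def)
    moreover have "snd (block i w') = snd (block i w)"
      using snd_eq by (auto simp: block_def fun_eq_iff)
    moreover have "fst (block i w') a = fst w' (k + i * u + a)"
      using assms(2) by (simp add: block_def)
    ultimately show ?thesis unfolding Pi mem_translate_tileG by metis
  qed
  have "(\<forall>j<d. block j w' \<in> P j) \<longleftrightarrow> block i w' \<in> P i"
    using w assms(1) other_blocks by (auto simp: cell_def) (metis)
  then show "w' \<in> cell P \<longleftrightarrow> fst w' (k + i * u + a) - fst s a \<in> T"
    using w'_space this_block by (simp add: cell_def)
qed

definition coordH :: "(nat \<Rightarrow> nat) \<Rightarrow> nat \<Rightarrow> nat" where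
  "coordH b j = (if j < l then j else l + (j - l) * v + b (j - l))"

lemma inj_on_coordH:
  assumes "\<And>i. i < d \<Longrightarrow> b i < v"
  shows "inj_on (coordH b) {..<l + d}"
proof (rule inj_onI)
  fix j j' assume "j \<in> {..<l + d}" "j' \<in> {..<l + d}" and eq: "coordH b j = coordH b j'"
  show "j = j'"
  proof (cases "j < l \<or> j' < l")
    case True
    then show ?thesis using eq by (auto simp: coordH_def split: if_splits)
  next
    case False
    then have "b (j - l) < v" "b (j' - l) < v"
      using assms \<open>j \<in> {..<l + d}\<close> \<open>j' \<in> {..<l + d}\<close> by auto
    then have "j - l = j' - l"
      using eq False mult_add_less_inj[of "b (j - l)" v "b (j' - l)" "j - l" "j' - l"]
      by (simp add: coordH_def)
    then show ?thesis using False by arith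
  qed
qed

lemma coordH_image_subset:
  assumes "\<And>i. i < d \<Longrightarrow> b i < v"
  shows "coordH b ` {..<l + d} \<subseteq> {..<d * v + l}"
proof
  fix c assume "c \<in> coordH b ` {..<l + d}"
  then obtain j where "j < l + d" "c = coordH b j" by blast
  then show "c \<in> {..<d * v + l}"
    using assms[of "j - l"] mult_add_less[of "j - l" d "b (j - l)" v] by (auto simp: coordH_def)
qed

lemma block_reindexH_coordH:
  fixes p :: "('g::zero, 'h::zero) point"
  assumes b: "\<And>i. i < d \<Longrightarrow> b i < v" and "p \<in> space k (l + d)" "i < d"
  shows "block i (reindexH (coordH b) (l + d) p) = (0, (\<lambda>_. 0)(b i := snd p (l + i)))"
proof -
  have "snd (reindexH (coordH b) (l + d) p) (l + i * v + b') =
      (if b' = b i then snd p (l + i) else 0)" if "b' < v" for b'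
  proof (cases "b' = b i")
    case True
    then show ?thesis
      using snd_reindexH_image[OF inj_on_coordH[where b = b, OF b], where j = "l + i" and p = p]
        assms(3)
      by (simp add: coordH_def)
  next
    case False
    have "l + i * v + b' \<notin> coordH b ` {..<l + d}"
    proof
      assume "l + i * v + b' \<in> coordH b ` {..<l + d}"
      then obtain j where "j < l + d" "l + i * v + b' = coordH b j" by blast
      moreover have "b (j - l) < v" if "\<not> j < l" using b \<open>j < l + d\<close> that by simp
      ultimately show False
        using False mult_add_less_inj[OF \<open>b' < v\<close>, of "b (j - l)" i "j - l"]
        by (auto simp: coordH_def split: if_splits)
    qed
    then show ?thesis using False by (simp add: snd_reindexH_outside)
  qed
  then show ?thesis
    using assms(2) b[OF assms(3)] by (auto simp: block_def mem_space prod_eq_iff fun_eq_iff)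
qed

definition embed :: "(nat \<Rightarrow> nat) \<Rightarrow> (nat \<Rightarrow> ('g::ab_group_add, 'h::ab_group_add) point)
    \<Rightarrow> ('g, 'h) point \<Rightarrow> ('g, 'h) point" where
  "embed b s p = reindexH (coordH b) (l + d) p + glue s"

lemma embed_in_space:
  assumes "\<And>i. i < d \<Longrightarrow> b i < v" "p \<in> space k (l + d)"
  shows "embed b s p \<in> space (d * u + k) (d * v + l)"
proof -
  have "reindexH (coordH b) (l + d) p \<in> space (d * u + k) (d * v + l)"
    using reindexH_in_space[OF assms(2) coordH_image_subset[where b = b, OF assms(1)]] by simp
  then show ?thesis unfolding embed_def using glue_in_space by (rule space_add)
qed

lemma block_embed:
  assumes "\<And>i. i < d \<Longrightarrow> b i < v" "s i \<in> space u v" "p \<in> space k (l + d)" "i < d"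
  shows "block i (embed b s p) = (0, (\<lambda>_. 0)(b i := snd p (l + i))) + s i"
  using assms by (simp add: embed_def block_add block_glue block_reindexH_coordH[where b = b])

lemma cell_eq_embed_image:
  fixes P :: "nat \<Rightarrow> ('g::ab_group_add, 'h::ab_group_add) point set"
  assumes b: "\<And>i. i < d \<Longrightarrow> b i < v" and s: "\<And>i. i < d \<Longrightarrow> s i \<in> space u v"
    and P: "\<And>i. i < d \<Longrightarrow> P i = translate (s i) (tileH (b i) B)"
  shows "cell P = embed b s ` space_B k l d B"
proof (intro equalityI subsetI)
  fix w assume w: "w \<in> cell P"
  have w_tile: "block i w - s i \<in> tileH (b i) B" if "i < d" for i
  proof -
    have "block i w \<in> P i" using w that by (simp add: cell_def)
    then show ?thesis by (simp add: P[OF that] mem_translate)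
  qed
  define p where "p = (\<lambda>c. if c < k then fst w c else 0,
    \<lambda>j. if j < l then snd w j
         else if j < l + d then snd w (coordH b j) - snd (s (j - l)) (b (j - l)) else 0)"
  have p_space: "p \<in> space k (l + d)" by (simp add: p_def mem_space)
  have p_block: "snd p (l + i) = snd (block i w - s i) (b i)" if "i < d" for i
    using that b[OF that] by (simp add: p_def block_def coordH_def)
  have "p \<in> space_B k l d B"
  proof -
    have "snd p j \<in> B" if "l \<le> j" "j < l + d" for j
      using p_block[of "j - l"] w_tile[of "j - l"] that by (simp add: mem_tileH)
    then show ?thesis using p_space by (simp add: mem_space_B)
  qed
  moreover have "embed b s p = w"
  proof (rule block_eqI)
    show "embed b s p \<in> space (d * u + k) (d * v + l)" using embed_in_space[OF b p_space] .
    show "w \<in> space (d * u + k) (d * v + l)" using w by (simp add: cell_def)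
    show "fst (embed b s p) c = fst w c" if "c < k" for c
      using that by (simp add: embed_def p_def glue_def)
    show "snd (embed b s p) c = snd w c" if "c < l" for c
      using that snd_reindexH_image[OF inj_on_coordH[where b = b, OF b], where j = c and p = p]
      by (simp add: embed_def p_def glue_def coordH_def)
    show "block i (embed b s p) = block i w" if "i < d" for i
    proof -
      have "block i (embed b s p) = (0, (\<lambda>_. 0)(b i := snd (block i w - s i) (b i))) + s i"
        using block_embed[OF b s p_space that] p_block[OF that] that by simp
      also have "\<dots> = (block i w - s i) + s i" using tileH_eq[OF w_tile[OF that]] by simp
      finally show ?thesis by simp
    qed
  qed
  ultimately show "w \<in> embed b s ` space_B k l d B" by (metis image_eqI)
next
  fix w assume "w \<in> embed b s ` space_B k l d B"
  then obtain p where p: "p \<in> space_B k l d B" "w = embed b s p" by blast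
  then have p_space: "p \<in> space k (l + d)" by (simp add: mem_space_B)
  have "block i w \<in> P i" if "i < d" for i
    using p that block_embed[OF b s p_space that]
    by (simp add: P mem_translate mem_tileH mem_space_B)
  then show "w \<in> cell P" using embed_in_space[OF b p_space] p(2) by (simp add: cell_def)
qed

lemma tilable_cell_embed:
  fixes P :: "nat \<Rightarrow> ('g::ab_group_add, 'h::ab_group_add) point set"
  assumes "tilable k (l + d) T A (space_B k l d B)"
    and b: "\<And>i. i < d \<Longrightarrow> b i < v" and "\<And>i. i < d \<Longrightarrow> s i \<in> space u v"
    and "\<And>i. i < d \<Longrightarrow> P i = translate (s i) (tileH (b i) B)"
  shows "tilable (d * u + k) (d * v + l) T A (cell P)"
  using cell_eq_embed_image[OF assms(2-4)]
    tilable_reindexH[OF assms(1) inj_on_coordH[where b = b, OF b]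
      coordH_image_subset[where b = b, OF b] _ glue_in_space[of s]]
  by (simp add: embed_def)

lemma tilable_cell:
  fixes P :: "nat \<Rightarrow> ('g::ab_group_add, 'h::ab_group_add) point set"
  assumes X: "tilable k (l + d) T A (space_B k l d B)"
    and P: "\<And>i. i < d \<Longrightarrow> P i \<in> copies u v T B"
  shows "tilable (d * u + k) (d * v + l) T A (cell P)"
proof (cases "\<exists>i<d. \<exists>a s. a < u \<and> P i = translate s (tileG a T)")
  case True
  then obtain i a s where "i < d" "a < u" "P i = translate s (tileG a T)" by blast
  then show ?thesis by (rule tilable_cell_lineG)
next
  case False
  have "\<forall>i. \<exists>bs. i < d \<longrightarrow>
      fst bs < v \<and> snd bs \<in> space u v \<and> P i = translate (snd bs) (tileH (fst bs) B)"
  proof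
    fix i
    show "\<exists>bs. i < d \<longrightarrow>
      fst bs < v \<and> snd bs \<in> space u v \<and> P i = translate (snd bs) (tileH (fst bs) B)"
    proof (cases "i < d")
      case True
      with P have "P i \<in> copies u v T B" by blast
      then show ?thesis
      proof (cases rule: copies_cases)
        case (1 a s)
        with False True show ?thesis by blast
      next
        case (2 b s)
        then show ?thesis by (intro exI[of _ "(b, s)"]) simp
      qed
    qed simp
  qed
  from choice[OF this] obtain bs where "\<forall>i. i < d \<longrightarrow> fst (bs i) < v \<and> snd (bs i) \<in> space u v \<and>
      P i = translate (snd (bs i)) (tileH (fst (bs i)) B)" by blast
  then show ?thesis
    by (intro tilable_cell_embed[OF X, where b = "fst \<circ> bs" and s = "snd \<circ> bs"]) auto
qed

lemma tilable_blocks: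
  fixes T :: "'g::ab_group_add set" and A B :: "'h::ab_group_add set"
  assumes "tilable u v T B (space u v)" and X: "tilable k (l + d) T A (space_B k l d B)"
  shows "tilable (d * u + k) (d * v + l) T A (space (d * u + k) (d * v + l))"
proof -
  obtain C where C: "C \<subseteq> copies u v T B" "pairwise disjnt C" "\<Union>C = space u v"
    using assms(1) unfolding tilable_def by blast
  let ?F = "\<lambda>z :: ('g, 'h) point. \<lambda>i. if i < d then tile_of C (block i z) else {}"
  show ?thesis
  proof (rule tilable_fibres[where f = ?F])
    fix z :: "('g, 'h) point"
    have P_tile: "?F z i \<in> C" if "i < d" for i
      using tile_of_mem[OF C(2), of "block i z"] C(3) block_in_space[of i z] that by simp
    have "?F w = ?F z \<longleftrightarrow> (\<forall>i<d. tile_of C (block i w) = ?F z i)" for w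
      by (auto simp: fun_eq_iff)
    also have "\<dots> w \<longleftrightarrow> (\<forall>i<d. block i w \<in> ?F z i)" for w
      using tile_of_eq_iff[OF C(2)] C(3) block_in_space[of _ w] P_tile by simp
    finally have "{w \<in> space (d * u + k) (d * v + l). ?F w = ?F z} = cell (?F z)"
      by (auto simp: cell_def)
    moreover have "tilable (d * u + k) (d * v + l) T A (cell (?F z))"
      using P_tile C(1) by (intro tilable_cell[OF X]) blast
    ultimately show
      "tilable (d * u + k) (d * v + l) T A {w \<in> space (d * u + k) (d * v + l). ?F w = ?F z}"
      by simp
  qed
qed

end

theorem corollary16:
  fixes T :: "'g::ab_group_add set" and A B :: "'h::ab_group_add set"
    and k l d u v :: nat
  assumes "T \<noteq> {}" and "A \<noteq> {}" and "A \<subseteq> B"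
    and "tilable k (l + d) T A
           {(x, y) \<in> space k (l + d). \<forall>j. l \<le> j \<and> j < l + d \<longrightarrow> y j \<in> B}"
    and "tilable u v T B (space u v)"
  shows "tilable (d * u + k) (d * v + l) T A (space (d * u + k) (d * v + l))"
  using blocks.tilable_blocks[OF assms(5) assms(4)[folded space_B_def]] .

end
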